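(* Let $\phi:\mathbb{R}_+\to\mathbb{R}_+$ be non-negative continuous, $d\nu=\phi(r)\,dr$, and let $I,J,K,L$ be non-negative functions on $\mathbb{R}_+$ such that $I(ab)\le bJ(a)+K(aL(b))$ for all $a,b\ge0$, $J$ is a lower isoperimetric function for $\nu$, $K$ is non-decreasing and concave, and $L$ is concave. Then every non-negative step function $f$ on $\mathbb{R}_+$ satisfies $$I\Big(\int_{\mathbb{R}_+}f\,d\nu\Big)\le K\Big(\int_{\mathbb{R}_+}L(f)\,d\nu\Big)+V_\nu(f).$$
   Context: $\mathbb{R}_+=[0,\infty)$. For Borel $A\subset\mathbb{R}_+$, $\nu^+(A)=\liminf_{r\to0^+}\frac{\nu(A^r)-\nu(A)}{r}$ with $A^r=\{x\in\mathbb{R}_+:\operatorname{dist}(x,A)<r\}$; $J$ is a lower isoperimetric function for $\nu$ if $\nu^+(A)\ge J(\nu(A))$ for all Borel $A$. A step function is a finite sum of elementary step functions $b\mathbf{1}_{[r,s)}$ ($b\in\mathbb{R}$, $0\le r<s$). The weighted total variation of a function $f$ with bounded support is $V_\nu(f)=\sup\sum_{k=1}^{m}|f(\xi_k)-f(\xi_{k-1})|\,\phi(\xi_{k-1})$, the supremum over all $m\in\mathbb{N}$ and increasing sequences $\xi_0<\dots<\xi_m$ of non-negative reals with $\operatorname{supp}f\subset[\xi_0,\xi_m]$. *)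

theory Defs
  imports "HOL-Analysis.Analysis"
begin

definition nu :: "(real \<Rightarrow> real) \<Rightarrow> real measure" where
  "nu \<phi> = density lborel (\<lambda>x. ennreal (indicator {0..} x * \<phi> x))"

definition enlarge :: "real set \<Rightarrow> real \<Rightarrow> real set" where
  "enlarge A r = {x. 0 \<le> x \<and> (\<exists>a\<in>A. dist x a < r)}"

text \<open>Boundary measure \<nu>^+(A) = liminf_{r \<rightarrow> 0+} (\<nu>(A^r) - \<nu>(A))/r, in the extended reals
  (only used for A with \<nu>(A) finite).\<close>
definition nu_plus :: "(real \<Rightarrow> real) \<Rightarrow> real set \<Rightarrow> ereal" where
  "nu_plus \<phi> A = Liminf (at_right 0)
     (\<lambda>r. (enn2ereal (emeasure (nu \<phi>) (enlarge A r)) - ereal (measure (nu \<phi>) A)) / ereal r)"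

definition lower_isoperimetric :: "(real \<Rightarrow> real) \<Rightarrow> (real \<Rightarrow> real) \<Rightarrow> bool" where
  "lower_isoperimetric \<phi> J \<longleftrightarrow>
     (\<forall>A. A \<in> sets borel \<and> A \<subseteq> {0..} \<and> emeasure (nu \<phi>) A < \<infinity> \<longrightarrow>
          ereal (J (measure (nu \<phi>) A)) \<le> nu_plus \<phi> A)"

definition step_fun :: "(real \<Rightarrow> real) \<Rightarrow> bool" where
  "step_fun f \<longleftrightarrow> (\<exists>ts :: (real \<times> real \<times> real) list.
      (\<forall>(b, r, s) \<in> set ts. 0 \<le> r \<and> r < s) \<and>
      f = (\<lambda>x. \<Sum>(b, r, s) \<leftarrow> ts. b * indicator {r..<s} x))"

definition weighted_var :: "(real \<Rightarrow> real) \<Rightarrow> (real \<Rightarrow> real) \<Rightarrow> ereal" where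
  "weighted_var \<phi> f = Sup {ereal (\<Sum>k = 1..m. \<bar>f (\<xi> k) - f (\<xi> (k - 1))\<bar> * \<phi> (\<xi> (k - 1))) | m \<xi>.
      0 \<le> \<xi> 0 \<and> (\<forall>k<m. \<xi> k < \<xi> (Suc k)) \<and> closure {x. f x \<noteq> 0} \<subseteq> {\<xi> 0 .. \<xi> m}}"

text \<open>K evaluated at a value of [0,\<infinity>]; at \<infinity> we use the monotone limit sup K.\<close>
definition K_ext :: "(real \<Rightarrow> real) \<Rightarrow> ennreal \<Rightarrow> ereal" where
  "K_ext K x = (if x = \<infinity> then (SUP t\<in>{0..}. ereal (K t)) else ereal (K (enn2real x)))"

end

theory Submission
  imports Defs
begin

text \<open>Write the step function as a layer cake \<open>f = \<Sum>\<^sub>j h\<^sub>j 1\<^bsub>A\<^sub>j\<^esub>\<close> over its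
  superlevel sets \<open>A\<^sub>j\<close>, so that with \<open>\<mu>\<^sub>j = \<nu>(A\<^sub>j)\<close> one has
  \<open>X = \<integral>f d\<nu> = \<Sum>\<^sub>j h\<^sub>j \<mu>\<^sub>j\<close>.
  The hypothesis at \<open>a = \<mu>\<^sub>j\<close>, \<open>b = X/\<mu>\<^sub>j\<close>, averaged with the weights
  \<open>h\<^sub>j \<mu>\<^sub>j / X\<close>, gives by concavity of \<open>K\<close>
  \<open>I(X) \<le> \<Sum>\<^sub>j h\<^sub>j J(\<mu>\<^sub>j) + K(\<Lambda>)\<close> with
  \<open>\<Lambda> = \<Sum>\<^sub>j (h\<^sub>j \<mu>\<^sub>j / X) \<mu>\<^sub>j L(X/\<mu>\<^sub>j)\<close>.
  Jensen's inequality for \<open>L\<close>, applied at each point, shows \<open>\<Lambda> \<le> \<integral>L(f) d\<nu>\<close>.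
  Finally \<open>J(\<mu>\<^sub>j) \<le> \<nu>\<^sup>+(A\<^sub>j)\<close>, and the boundary of \<open>A\<^sub>j\<close> consists of the
  breakpoints at which \<open>f\<close> crosses the level, each contributing the density there.
  Summed over the layers, these contributions are the jumps of \<open>f\<close> weighted by \<open>\<phi>\<close>,
  which bound \<open>V\<^sub>\<nu>(f)\<close> from below by continuity of \<open>\<phi>\<close>.\<close>

section \<open>Concave functions on the half-line\<close>

lemma concave_on_nonneg_imp_mono:
  fixes L :: "real \<Rightarrow> real"
  assumes concave: "concave_on {0..} L" and nonneg: "\<And>x. 0 \<le> x \<Longrightarrow> 0 \<le> L x"
    and "0 \<le> x" "x \<le> y"
  shows "L x \<le> L y"
proof (rule ccontr)
  assume "\<not> L x \<le> L y"
  hence less: "L y < L x" by simp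
  have Ly: "0 \<le> L y" using nonneg assms by auto
  define v where "v = (L x - L y) / (2 * L x)"
  have v: "0 < v" "v \<le> 1/2" using less Ly by (simp_all add: v_def field_simps)
  \<comment> \<open>Extending the chord from \<open>x\<close> through \<open>y\<close> far enough to the right would make
    \<open>L\<close> negative.\<close>
  define z where "z = x + (y - x) / v"
  have "0 \<le> (y - x) / v" using assms v by simp
  hence z: "0 \<le> z" unfolding z_def using assms by linarith
  have y_eq: "y = (1 - v) * x + v * z" using v by (simp add: z_def field_simps)
  have "(1 - v) * L x + v * L z \<le> L y"
    using concave_onD[OF concave, of v x z] assms z y_eq v by simp
  moreover have "0 \<le> v * L z" using nonneg z v by simp
  moreover have "(1 - v) * L x = L x - (L x - L y) / 2" using less Ly by (simp add: v_def field_simps)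
  ultimately have "L x - (L x - L y) / 2 \<le> L y" by linarith
  thus False using less by (simp add: field_simps)
qed

lemma concave_on_nonneg_scale_le:
  fixes L :: "real \<Rightarrow> real"
  assumes concave: "concave_on {0..} L" and nonneg: "\<And>x. 0 \<le> x \<Longrightarrow> 0 \<le> L x"
    and "0 \<le> s" "s \<le> 1" "0 \<le> t"
  shows "s * L t \<le> L (s * t)"
proof -
  have "(1 - s) * L 0 + s * L t \<le> L ((1 - s) * 0 + s * t)"
    using concave_onD[OF concave, of s 0 t] assms by simp
  moreover have "0 \<le> (1 - s) * L 0" using nonneg assms by simp
  ultimately show ?thesis by simp
qed

lemma concave_layer_sum_le:
  fixes L :: "real \<Rightarrow> real" and h \<mu> :: "'a \<Rightarrow> real"
  assumes concave: "concave_on {0..} L" and nonneg: "\<And>x. 0 \<le> x \<Longrightarrow> 0 \<le> L x"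
    and "finite S" and pos: "\<And>j. j \<in> S \<Longrightarrow> 0 < h j \<and> 0 < \<mu> j" and "0 < X"
    and mass: "(\<Sum>j\<in>S. h j * \<mu> j) \<le> X" and height: "(\<Sum>j\<in>S. h j) \<le> F"
  shows "(\<Sum>j\<in>S. h j * \<mu> j * L (X / \<mu> j) / X) \<le> L F"
proof (cases "S = {}")
  case True thus ?thesis using nonneg height by simp
next
  case False
  define s where "s = (\<Sum>j\<in>S. h j * \<mu> j) / X"
  define H where "H = (\<Sum>j\<in>S. h j)"
  have mass_pos: "0 < (\<Sum>j\<in>S. h j * \<mu> j)" using False \<open>finite S\<close> pos by (intro sum_pos) auto
  hence s: "0 < s" "s \<le> 1" using \<open>0 < X\<close> mass by (simp_all add: s_def)
  have "0 \<le> H" using pos by (auto simp: H_def intro: sum_nonneg less_imp_le)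
  \<comment> \<open>Jensen's inequality with weights proportional to \<open>h j * \<mu> j\<close>.\<close>
  define w where "w j = h j * \<mu> j / (X * s)" for j
  have "(\<Sum>j\<in>S. w j) = 1"
    using mass_pos \<open>0 < X\<close> by (simp add: w_def s_def sum_divide_distrib[symmetric])
  hence "(\<Sum>j\<in>S. w j * L (X / \<mu> j)) \<le> L (\<Sum>j\<in>S. w j *\<^sub>R (X / \<mu> j))"
    using pos s \<open>0 < X\<close>
    by (intro concave_on_sum[OF \<open>finite S\<close> False concave]) (auto simp: w_def less_imp_le)
  also have "(\<Sum>j\<in>S. w j *\<^sub>R (X / \<mu> j)) = H / s"
    unfolding H_def sum_divide_distrib
  proof (rule sum.cong)
    fix j assume "j \<in> S"
    thus "w j *\<^sub>R (X / \<mu> j) = h j / s" using pos[of j] s \<open>0 < X\<close> by (simp add: w_def)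
  qed simp
  finally have jensen: "(\<Sum>j\<in>S. w j * L (X / \<mu> j)) \<le> L (H / s)" .
  have "(\<Sum>j\<in>S. h j * \<mu> j * L (X / \<mu> j) / X) = s * (\<Sum>j\<in>S. w j * L (X / \<mu> j))"
    using s \<open>0 < X\<close> by (simp add: w_def sum_distrib_left sum_divide_distrib)
  also have "\<dots> \<le> s * L (H / s)" using jensen s by simp
  also have "\<dots> \<le> L (s * (H / s))"
    using s \<open>0 \<le> H\<close> by (intro concave_on_nonneg_scale_le[OF concave nonneg]) auto
  also have "\<dots> \<le> L F"
    using s \<open>0 \<le> H\<close> height by (intro concave_on_nonneg_imp_mono[OF concave nonneg]) (auto simp: H_def)
  finally show ?thesis .
qed

lemma finite_set_strict_mono_enumeration:
  fixes S :: "'a::linorder set"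
  assumes "finite S" and "a \<in> S" and least: "\<And>x. x \<in> S \<Longrightarrow> a \<le> x"
  obtains m :: nat and q :: "nat \<Rightarrow> 'a" where "strict_mono_on {..m} q" "q ` {..m} = S" "q 0 = a"
proof -
  define xs where "xs = sorted_list_of_set S"
  define m where "m = length xs - 1"
  have set_xs: "set xs = S" using \<open>finite S\<close> by (simp add: xs_def)
  hence "xs \<noteq> []" using \<open>a \<in> S\<close> by auto
  hence "length xs = Suc m" by (simp add: m_def)
  hence atMost_m: "{..m} = {..<length xs}" by (simp add: lessThan_Suc_atMost)
  have mono: "strict_mono_on {..m} ((!) xs)"
    using sorted_wrt_nth_less[OF strict_sorted_list_of_set[of S, folded xs_def]]
    by (auto simp: atMost_m intro!: strict_mono_onI)
  have image: "(!) xs ` {..m} = S"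
    by (auto simp: atMost_m set_xs[symmetric] in_set_conv_nth)
  have "xs ! 0 \<le> a"
  proof -
    obtain k where "k \<le> m" "xs ! k = a" using \<open>a \<in> S\<close> image by (metis atMost_iff imageE)
    thus ?thesis using strict_mono_on_leD[OF mono, of 0 k] by simp
  qed
  moreover have "xs ! 0 \<in> S" using image by auto
  ultimately have "xs ! 0 = a" using least by (simp add: order_antisym)
  show ?thesis by (rule that[OF mono image \<open>xs ! 0 = a\<close>])
qed

lemma sum_crossed_levels:
  fixes c :: "nat \<Rightarrow> real"
  assumes mono: "strict_mono_on {..n} c" and "a \<le> n" "b \<le> n"
  shows "(\<Sum>j<n. if (c (Suc j) \<le> c a) \<noteq> (c (Suc j) \<le> c b) then c (Suc j) - c j else 0)
    = \<bar>c a - c b\<bar>"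
proof -
  have ordered: "(\<Sum>j<n. if (c (Suc j) \<le> c a) \<noteq> (c (Suc j) \<le> c b) then c (Suc j) - c j else 0)
      = c b - c a" if "a \<le> b" "b \<le> n" for a b
  proof -
    have "(\<Sum>j<n. if (c (Suc j) \<le> c a) \<noteq> (c (Suc j) \<le> c b) then c (Suc j) - c j else 0)
        = (\<Sum>j<n. if j \<in> {a..<b} then c (Suc j) - c j else 0)"
      using that by (intro sum.cong) (auto simp: strict_mono_on_less_eq[OF mono])
    also have "\<dots> = (\<Sum>j\<in>{..<n} \<inter> {a..<b}. c (Suc j) - c j)"
      by (rule sum.inter_restrict[symmetric]) simp
    also have "{..<n} \<inter> {a..<b} = {a..<b}" using \<open>b \<le> n\<close> by auto
    also have "(\<Sum>j=a..<b. c (Suc j) - c j) = c b - c a" by (rule sum_Suc_diff'[OF \<open>a \<le> b\<close>])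
    finally show ?thesis .
  qed
  show ?thesis
  proof (cases "a \<le> b")
    case True
    thus ?thesis using ordered[of a b] strict_mono_on_leD[OF mono, of a b] assms by simp
  next
    case False
    have "(\<Sum>j<n. if (c (Suc j) \<le> c a) \<noteq> (c (Suc j) \<le> c b) then c (Suc j) - c j else 0)
        = (\<Sum>j<n. if (c (Suc j) \<le> c b) \<noteq> (c (Suc j) \<le> c a) then c (Suc j) - c j else 0)"
      by (intro sum.cong) auto
    thus ?thesis using False ordered[of b a] strict_mono_on_leD[OF mono, of b a] assms by simp
  qed
qed

lemma sum_atLeast1_atMost_pairs:
  fixes t :: "nat \<Rightarrow> 'a::comm_monoid_add"
  shows "(\<Sum>k=1..2*n. t k) = (\<Sum>i=1..n. t (2*i - 1) + t (2*i))"
proof (induction n)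
  case (Suc n)
  have "(\<Sum>k=1..2 * Suc n. t k) = (\<Sum>k=1..2*n. t k) + t (2*n + 1) + t (2*n + 2)"
    by (simp add: sum.cl_ivl_Suc add.assoc)
  with Suc show ?case by (simp add: sum.cl_ivl_Suc add.assoc)
qed simp

lemma sum_list_map_eq_0:
  "(\<And>x. x \<in> set xs \<Longrightarrow> g x = 0) \<Longrightarrow> sum_list (map g xs) = (0::'a::monoid_add)"
  by (induction xs) auto

section \<open>Step functions\<close>

locale step_partition =
  fixes f :: "real \<Rightarrow> real" and N :: nat and p :: "nat \<Rightarrow> real"
  assumes strict_mono_p: "strict_mono_on {..N} p"
    and p_0: "p 0 = 0"
    and constant_on_cell: "\<And>i x. i < N \<Longrightarrow> p i \<le> x \<Longrightarrow> x < p (Suc i) \<Longrightarrow> f x = f (p i)"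
    and zero_beyond: "\<And>x. p N \<le> x \<Longrightarrow> f x = 0"
    and zero_negative: "\<And>x. x < 0 \<Longrightarrow> f x = 0"

lemma step_fun_imp_step_partition:
  assumes "step_fun f"
  obtains N p where "step_partition f N p"
proof -
  obtain ts :: "(real \<times> real \<times> real) list" where
    ts: "\<forall>(b, r, s) \<in> set ts. 0 \<le> r \<and> r < s"
    and f: "f = (\<lambda>x. \<Sum>(b, r, s) \<leftarrow> ts. b * indicator {r..<s} x)"
    using assms unfolding step_fun_def by blast
  define S where "S = insert 0 ((\<lambda>(b, r, s). r) ` set ts \<union> (\<lambda>(b, r, s). s) ` set ts)"
  have endpoints: "r \<in> S" "s \<in> S" if "(b, r, s) \<in> set ts" for b r s
    using that unfolding S_def by force+
  have "finite S" "0 \<in> S" by (simp_all add: S_def)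
  moreover have "0 \<le> y" if "y \<in> S" for y
    using that ts unfolding S_def by auto
  ultimately obtain N :: nat and p :: "nat \<Rightarrow> real"
    where mono: "strict_mono_on {..N} p" and image: "p ` {..N} = S" and "p 0 = 0"
    by (rule finite_set_strict_mono_enumeration) blast
  \<comment> \<open>No endpoint lies strictly inside a cell, so the indicators are constant on cells.\<close>
  have endpoint_le_iff: "y \<le> x \<longleftrightarrow> y \<le> p i"
    if "y \<in> S" "i < N" "p i \<le> x" "x < p (Suc i)" for x y i
  proof -
    obtain k where "k \<le> N" "y = p k" using \<open>y \<in> S\<close> image by auto
    thus ?thesis
      using that strict_mono_on_leD[OF mono, of k i] strict_mono_on_leD[OF mono, of "Suc i" k]
      by (cases "k \<le> i") auto
  qed
  show ?thesis
  proof (rule that, unfold_locales)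
    fix i x assume cell: "i < N" "p i \<le> x" "x < p (Suc i)"
    have "indicator {r..<s} x = (indicator {r..<s} (p i) :: real)" if "(b, r, s) \<in> set ts" for b r s
      using endpoint_le_iff[OF endpoints(1)[OF that] cell] endpoint_le_iff[OF endpoints(2)[OF that] cell]
      by (cases "s \<le> x") (simp_all add: indicator_def)
    thus "f x = f (p i)" unfolding f by (intro arg_cong[where f = sum_list] map_cong) auto
  next
    fix x assume "p N \<le> x"
    have "s \<le> p N" if "(b, r, s) \<in> set ts" for b r s
      using endpoints(2)[OF that] image strict_mono_on_leD[OF mono] by auto
    thus "f x = 0" unfolding f using \<open>p N \<le> x\<close> by (fastforce intro!: sum_list_map_eq_0 simp: indicator_def)
  next
    fix x :: real assume "x < 0"
    thus "f x = 0" unfolding f using ts by (fastforce intro!: sum_list_map_eq_0 simp: indicator_def)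
  qed fact+
qed

context step_partition
begin

lemma p_le_iff [simp]: "i \<le> N \<Longrightarrow> k \<le> N \<Longrightarrow> p i \<le> p k \<longleftrightarrow> i \<le> k"
  using strict_mono_on_less_eq[OF strict_mono_p] by simp

lemma p_less_iff [simp]: "i \<le> N \<Longrightarrow> k \<le> N \<Longrightarrow> p i < p k \<longleftrightarrow> i < k"
  using strict_mono_on_less[OF strict_mono_p] by simp

lemma p_nonneg: "i \<le> N \<Longrightarrow> 0 \<le> p i"
  using p_le_iff[of 0 i] p_0 by simp

lemma obtain_cell:
  assumes "0 \<le> x"
  obtains i where "i \<le> N" "p i \<le> x" "i < N \<Longrightarrow> x < p (Suc i)" "f x = f (p i)"
proof (cases "x < p N")
  case True
  define K where "K = {k. k \<le> N \<and> p k \<le> x}"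
  have "finite K" "0 \<in> K" using assms p_0 by (auto simp: K_def)
  define i where "i = Max K"
  have "i \<in> K" unfolding i_def using \<open>finite K\<close> \<open>0 \<in> K\<close> by (intro Max_in) auto
  hence i: "i \<le> N" "p i \<le> x" by (simp_all add: K_def)
  have "Suc i \<notin> K" using Max_ge[OF \<open>finite K\<close>, of "Suc i"] by (auto simp: i_def)
  moreover have "i < N" using True i by (metis le_neq_implies_less not_le)
  ultimately have "x < p (Suc i)" by (auto simp: K_def)
  thus ?thesis using that i \<open>i < N\<close> constant_on_cell by blast
next
  case False
  thus ?thesis using that[of N] zero_beyond by simp
qed

lemma obtain_min_gap:
  obtains d where "0 < d" "\<And>i. i < N \<Longrightarrow> d \<le> p (Suc i) - p i"
proof
  define D where "D = insert 1 ((\<lambda>i. p (Suc i) - p i) ` {..<N})"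
  have "finite D" "D \<noteq> {}" by (simp_all add: D_def)
  moreover have "\<forall>y\<in>D. 0 < y" by (auto simp: D_def)
  ultimately show "0 < Min D" by simp
  show "Min D \<le> p (Suc i) - p i" if "i < N" for i
    using that \<open>finite D\<close> by (intro Min_le) (auto simp: D_def)
qed

lemma adjacent_cells:
  assumes gap: "\<And>i. i < N \<Longrightarrow> d \<le> p (Suc i) - p i"
    and "i < k" "k \<le> N" "x < p (Suc i)" "p k \<le> y" "y - x < d"
  shows "k = Suc i"
proof (rule ccontr)
  assume "k \<noteq> Suc i"
  hence "Suc (Suc i) \<le> k" using \<open>i < k\<close> by simp
  hence "p (Suc (Suc i)) \<le> p k" and "d \<le> p (Suc (Suc i)) - p (Suc i)"
    using \<open>k \<le> N\<close> gap[of "Suc i"] by auto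
  thus False using assms by linarith
qed

definition superlevel :: "real \<Rightarrow> real set" where
  "superlevel t = {x. 0 \<le> x \<and> t \<le> f x}"

lemma superlevel_eq_cells:
  assumes "0 < t"
  shows "superlevel t = (\<Union>i\<in>{i. i < N \<and> t \<le> f (p i)}. {p i..<p (Suc i)})"
proof
  show "superlevel t \<subseteq> (\<Union>i\<in>{i. i < N \<and> t \<le> f (p i)}. {p i..<p (Suc i)})"
  proof
    fix x assume "x \<in> superlevel t"
    hence "0 \<le> x" "t \<le> f x" by (simp_all add: superlevel_def)
    from \<open>0 \<le> x\<close> obtain i where i: "i \<le> N" "p i \<le> x" "i < N \<Longrightarrow> x < p (Suc i)" "f x = f (p i)"
      by (rule obtain_cell) blast
    have "i \<noteq> N"
    proof
      assume "i = N"
      hence "f x = 0" using i zero_beyond by simp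
      thus False using \<open>t \<le> f x\<close> assms by simp
    qed
    hence "i < N" using i(1) by simp
    thus "x \<in> (\<Union>i\<in>{i. i < N \<and> t \<le> f (p i)}. {p i..<p (Suc i)})"
      using i \<open>t \<le> f x\<close> by auto
  qed
  show "(\<Union>i\<in>{i. i < N \<and> t \<le> f (p i)}. {p i..<p (Suc i)}) \<subseteq> superlevel t"
  proof clarify
    fix i x assume "i < N" "t \<le> f (p i)" "x \<in> {p i..<p (Suc i)}"
    moreover from this have "f x = f (p i)" by (intro constant_on_cell) auto
    moreover have "0 \<le> p i" using \<open>i < N\<close> by (intro p_nonneg) simp
    ultimately show "x \<in> superlevel t" by (simp add: superlevel_def)
  qed
qed

lemma superlevel_subset:
  assumes "0 < t" shows "superlevel t \<subseteq> {0..p N}"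
proof
  fix x assume "x \<in> superlevel t"
  hence "0 \<le> x" "f x \<noteq> 0" using assms by (auto simp: superlevel_def)
  thus "x \<in> {0..p N}" using zero_beyond[of x] by (cases "p N \<le> x") auto
qed

lemma superlevel_in_borel: "0 < t \<Longrightarrow> superlevel t \<in> sets borel"
  by (simp add: superlevel_eq_cells)

lemma obtain_levels:
  assumes "\<And>x. 0 \<le> x \<Longrightarrow> 0 \<le> f x"
  obtains n :: nat and c :: "nat \<Rightarrow> real"
  where "strict_mono_on {..n} c" "c 0 = 0" "\<And>x. 0 \<le> x \<Longrightarrow> f x \<in> c ` {..n}"
proof -
  define C where "C = insert 0 ((\<lambda>i. f (p i)) ` {..N})"
  have "finite C" "0 \<in> C" by (simp_all add: C_def)
  moreover have "0 \<le> y" if "y \<in> C" for y using that assms p_nonneg by (auto simp: C_def)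
  ultimately obtain n :: nat and c :: "nat \<Rightarrow> real"
    where "strict_mono_on {..n} c" "c ` {..n} = C" "c 0 = 0"
    by (rule finite_set_strict_mono_enumeration) blast
  moreover have "f x \<in> C" if "0 \<le> x" for x
    using that by (rule obtain_cell) (auto simp: C_def)
  ultimately show ?thesis using that by blast
qed

end

section \<open>The measure \<open>\<nu>\<close>\<close>

lemma sets_nu [simp, measurable_cong]: "sets (nu \<phi>) = sets borel"
  by (simp add: nu_def)

lemma space_nu [simp]: "space (nu \<phi>) = UNIV"
  by (simp add: nu_def)

locale nonneg_density =
  fixes \<phi> :: "real \<Rightarrow> real"
  assumes continuous_\<phi>: "continuous_on {0..} \<phi>"
    and \<phi>_nonneg: "\<And>x. 0 \<le> x \<Longrightarrow> 0 \<le> \<phi> x"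
begin

lemma integrable_on_Icc: "0 \<le> a \<Longrightarrow> \<phi> integrable_on {a..b}"
  by (rule integrable_continuous_interval, rule continuous_on_subset[OF continuous_\<phi>]) auto

lemma integral_Icc_nonneg: "0 \<le> a \<Longrightarrow> 0 \<le> integral {a..b} \<phi>"
  by (rule integral_nonneg[OF integrable_on_Icc]) (auto intro: \<phi>_nonneg)

lemma emeasure_nu_Icc:
  assumes "0 \<le> a"
  shows "emeasure (nu \<phi>) {a..b} = ennreal (integral {a..b} \<phi>)"
proof -
  have "(\<lambda>x. indicator {0::real..} x *\<^sub>R \<phi> x) \<in> borel_measurable borel"
    by (rule borel_measurable_continuous_on_indicator) (use continuous_\<phi> in auto)
  hence "emeasure (nu \<phi>) {a..b} = (\<integral>\<^sup>+x\<in>{a..b}. ennreal (indicator {0..} x * \<phi> x) \<partial>lborel)"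
    unfolding nu_def by (intro emeasure_density) auto
  also have "\<dots> = (\<integral>\<^sup>+x. ennreal (indicator {a..b} x * \<phi> x) \<partial>lborel)"
    using assms by (intro nn_integral_cong) (auto simp: indicator_def)
  also have "\<dots> = ennreal (integral {a..b} \<phi>)"
    using assms integrable_on_Icc[OF assms, of b]
    by (intro nn_integral_has_integral_lebesgue) (auto intro: \<phi>_nonneg)
  finally show ?thesis .
qed

lemma measure_nu_Icc: "0 \<le> a \<Longrightarrow> measure (nu \<phi>) {a..b} = integral {a..b} \<phi>"
  by (simp add: measure_def emeasure_nu_Icc integral_Icc_nonneg)

lemma emeasure_nu_bounded_finite:
  assumes "A \<subseteq> {a..b}" "0 \<le> a"
  shows "emeasure (nu \<phi>) A < \<infinity>"
proof -
  have "emeasure (nu \<phi>) A \<le> emeasure (nu \<phi>) {a..b}" using assms by (intro emeasure_mono) auto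
  thus ?thesis using emeasure_nu_Icc[OF assms(2)] by (simp add: le_less_trans)
qed

lemma integral_difference_quotient:
  assumes "0 \<le> x" "x \<le> B"
  shows "((\<lambda>y. (integral {0..y} \<phi> - integral {0..x} \<phi>) / (y - x)) \<longlongrightarrow> \<phi> x) (at x within {0..B})"
proof -
  have "continuous_on {0..B} \<phi>" by (rule continuous_on_subset[OF continuous_\<phi>]) auto
  hence "((\<lambda>u. integral {0..u} \<phi>) has_real_derivative \<phi> x) (at x within {0..B})"
    using assms integral_has_vector_derivative has_real_derivative_iff_has_vector_derivative by auto
  thus ?thesis by (simp add: has_field_derivative_iff)
qed

lemma integral_split_Icc:
  assumes "0 \<le> a" "a \<le> c" "c \<le> b"
  shows "integral {a..b} \<phi> = integral {a..c} \<phi> + integral {c..b} \<phi>"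
  using Henstock_Kurzweil_Integration.integral_combine[of a c b \<phi>] integrable_on_Icc[of a b] assms
  by simp

lemma tendsto_right_average:
  assumes "0 \<le> x"
  shows "((\<lambda>r. integral {x..x + r} \<phi> / r) \<longlongrightarrow> \<phi> x) (at_right 0)"
proof -
  have "filterlim (\<lambda>r. x + r) (at x within {0..x + 1}) (at_right 0)"
    unfolding filterlim_at
  proof
    show "\<forall>\<^sub>F r in at_right 0. x + r \<in> {0..x + 1} \<and> x + r \<noteq> x"
      unfolding eventually_at_right_field using assms by (intro exI[of _ 1]) auto
    show "((\<lambda>r. x + r) \<longlongrightarrow> x) (at_right 0)"
      using tendsto_add[OF tendsto_const tendsto_ident_at, of x 0 "{0<..}"] by simp
  qed
  from filterlim_compose[OF integral_difference_quotient this]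
  have "((\<lambda>r. (integral {0..x + r} \<phi> - integral {0..x} \<phi>) / (x + r - x)) \<longlongrightarrow> \<phi> x) (at_right 0)"
    using assms by simp
  moreover have "\<forall>\<^sub>F r in at_right 0.
      (integral {0..x + r} \<phi> - integral {0..x} \<phi>) / (x + r - x) = integral {x..x + r} \<phi> / r"
    unfolding eventually_at_right_field
  proof (intro exI[of _ 1] conjI allI impI)
    fix r :: real assume "0 < r"
    thus "(integral {0..x + r} \<phi> - integral {0..x} \<phi>) / (x + r - x) = integral {x..x + r} \<phi> / r"
      using integral_split_Icc[of 0 x "x + r"] assms by simp
  qed simp
  ultimately show ?thesis by (rule Lim_transform_eventually)
qed

lemma tendsto_left_average:
  assumes "0 < x"
  shows "((\<lambda>r. integral {x - r..x} \<phi> / r) \<longlongrightarrow> \<phi> x) (at_right 0)"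
proof -
  have "filterlim (\<lambda>r. x - r) (at x within {0..x}) (at_right 0)"
    unfolding filterlim_at
  proof
    show "\<forall>\<^sub>F r in at_right 0. x - r \<in> {0..x} \<and> x - r \<noteq> x"
      unfolding eventually_at_right_field using assms by (intro exI[of _ x]) auto
    show "((\<lambda>r. x - r) \<longlongrightarrow> x) (at_right 0)"
      using tendsto_diff[OF tendsto_const tendsto_ident_at, of x 0 "{0<..}"] by simp
  qed
  from filterlim_compose[OF integral_difference_quotient this]
  have "((\<lambda>r. (integral {0..x - r} \<phi> - integral {0..x} \<phi>) / (x - r - x)) \<longlongrightarrow> \<phi> x) (at_right 0)"
    using assms by simp
  moreover have "\<forall>\<^sub>F r in at_right 0.
      (integral {0..x - r} \<phi> - integral {0..x} \<phi>) / (x - r - x) = integral {x - r..x} \<phi> / r"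
    unfolding eventually_at_right_field
  proof (intro exI[of _ x] conjI allI impI)
    fix r :: real assume "0 < r" "r < x"
    hence "integral {0..x} \<phi> = integral {0..x - r} \<phi> + integral {x - r..x} \<phi>"
      by (intro integral_split_Icc) auto
    thus "(integral {0..x - r} \<phi> - integral {0..x} \<phi>) / (x - r - x) = integral {x - r..x} \<phi> / r"
      using \<open>0 < r\<close> by (simp add: field_simps)
  qed (use assms in simp)
  ultimately show ?thesis by (rule Lim_transform_eventually)
qed

lemma tendsto_left:
  assumes "0 < x"
  shows "((\<lambda>\<delta>. \<phi> (x - \<delta>)) \<longlongrightarrow> \<phi> x) (at_right 0)"
proof -
  have "(\<phi> \<longlongrightarrow> \<phi> x) (at x within {0..})"
    using continuous_\<phi> assms by (simp add: continuous_on_def)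
  moreover have "filterlim (\<lambda>r. x - r) (at x within {0..}) (at_right 0)"
    unfolding filterlim_at
  proof
    show "\<forall>\<^sub>F r in at_right 0. x - r \<in> {0..} \<and> x - r \<noteq> x"
      unfolding eventually_at_right_field using assms by (intro exI[of _ x]) auto
    show "((\<lambda>r. x - r) \<longlongrightarrow> x) (at_right 0)"
      using tendsto_diff[OF tendsto_const tendsto_ident_at, of x 0 "{0<..}"] by simp
  qed
  ultimately show ?thesis by (rule filterlim_compose)
qed

end

section \<open>Boundary measure and weighted variation of a step function\<close>

locale weighted_step_partition = nonneg_density \<phi> + step_partition f N p
  for \<phi> f :: "real \<Rightarrow> real" and N :: nat and p :: "nat \<Rightarrow> real"
begin

lemma emeasure_superlevel_finite: "0 < t \<Longrightarrow> emeasure (nu \<phi>) (superlevel t) < \<infinity>"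
  using superlevel_subset by (intro emeasure_nu_bounded_finite[of _ 0 "p N"]) auto

definition boundary_strip :: "real \<Rightarrow> nat \<Rightarrow> real \<Rightarrow> real set" where
  "boundary_strip t i r =
    (if f (p (i - 1)) < t \<and> t \<le> f (p i) then {p i - r..p i}
     else if t \<le> f (p (i - 1)) \<and> f (p i) < t then {p i..p i + r} else {})"

lemma enlarge_superlevel_subset:
  assumes "0 < t" and gap: "\<And>i. i < N \<Longrightarrow> d \<le> p (Suc i) - p i" and "r \<le> d"
  shows "enlarge (superlevel t) r \<subseteq> superlevel t \<union> (\<Union>i\<in>{1..N}. boundary_strip t i r)"
proof
  fix x assume "x \<in> enlarge (superlevel t) r"
  then obtain a where "0 \<le> x" "0 \<le> a" "t \<le> f a" "\<bar>x - a\<bar> < r"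
    unfolding enlarge_def superlevel_def dist_real_def by auto
  show "x \<in> superlevel t \<union> (\<Union>i\<in>{1..N}. boundary_strip t i r)"
  proof (cases "t \<le> f x")
    case True
    thus ?thesis using \<open>0 \<le> x\<close> by (simp add: superlevel_def)
  next
    case False
    from \<open>0 \<le> x\<close> obtain i where i: "i \<le> N" "p i \<le> x" "i < N \<Longrightarrow> x < p (Suc i)" "f x = f (p i)"
      by (rule obtain_cell) blast
    from \<open>0 \<le> a\<close> obtain k where k: "k \<le> N" "p k \<le> a" "k < N \<Longrightarrow> a < p (Suc k)" "f a = f (p k)"
      by (rule obtain_cell) blast
    have levels: "f (p i) < t" "t \<le> f (p k)" using False i k \<open>t \<le> f a\<close> by auto
    hence "i < k \<or> k < i" by (metis linorder_neqE_nat order.strict_iff_not)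
    thus ?thesis
    proof
      assume "i < k"
      hence "x < p (Suc i)" using i k by simp
      hence "k = Suc i" using \<open>i < k\<close> k \<open>\<bar>x - a\<bar> < r\<close> \<open>r \<le> d\<close>
        by (intro adjacent_cells[OF gap, of i k x a]) auto
      hence "x \<in> boundary_strip t k r"
        using levels \<open>x < p (Suc i)\<close> k \<open>\<bar>x - a\<bar> < r\<close> by (auto simp: boundary_strip_def)
      thus ?thesis using \<open>k = Suc i\<close> k by auto
    next
      assume "k < i"
      hence "a < p (Suc k)" using i k by simp
      hence "i = Suc k" using \<open>k < i\<close> i \<open>\<bar>x - a\<bar> < r\<close> \<open>r \<le> d\<close>
        by (intro adjacent_cells[OF gap, of k i a x]) auto
      hence "x \<in> boundary_strip t i r"
        using levels \<open>a < p (Suc k)\<close> i \<open>\<bar>x - a\<bar> < r\<close> by (auto simp: boundary_strip_def)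
      thus ?thesis using \<open>i = Suc k\<close> i by auto
    qed
  qed
qed

lemma p_ge_gap:
  assumes gap: "\<And>i. i < N \<Longrightarrow> d \<le> p (Suc i) - p i" and "i \<in> {1..N}"
  shows "d \<le> p i"
proof -
  obtain j where "i = Suc j" "j < N" using assms(2) by (cases i) auto
  thus ?thesis using gap[of j] p_nonneg[of j] by simp
qed

lemma measure_boundary_strip:
  assumes "i \<le> N" "r \<le> p i"
  shows "measure (nu \<phi>) (boundary_strip t i r) =
    (if f (p (i - 1)) < t \<and> t \<le> f (p i) then integral {p i - r..p i} \<phi>
     else if t \<le> f (p (i - 1)) \<and> f (p i) < t then integral {p i..p i + r} \<phi> else 0)"
  using assms p_nonneg[of i] by (simp add: boundary_strip_def measure_nu_Icc)

lemma emeasure_boundary_strip: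
  assumes "i \<le> N" "r \<le> p i"
  shows "emeasure (nu \<phi>) (boundary_strip t i r) = ennreal (measure (nu \<phi>) (boundary_strip t i r))"
proof -
  have "boundary_strip t i r \<subseteq> {p i - r..p i + r}" by (auto simp: boundary_strip_def)
  hence "emeasure (nu \<phi>) (boundary_strip t i r) < \<infinity>"
    using assms by (intro emeasure_nu_bounded_finite) auto
  thus ?thesis by (simp add: emeasure_eq_ennreal_measure)
qed

lemma tendsto_boundary_strip:
  assumes "i \<in> {1..N}"
  shows "((\<lambda>r. measure (nu \<phi>) (boundary_strip t i r) / r) \<longlongrightarrow>
    (if (t \<le> f (p (i - 1))) \<noteq> (t \<le> f (p i)) then \<phi> (p i) else 0)) (at_right 0)"
proof -
  obtain d where gap: "0 < d" "\<And>i. i < N \<Longrightarrow> d \<le> p (Suc i) - p i" by (rule obtain_min_gap) blast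
  have "0 < p i" using p_ge_gap[OF gap(2) assms] gap(1) by simp
  have "((\<lambda>r. (if f (p (i - 1)) < t \<and> t \<le> f (p i) then integral {p i - r..p i} \<phi>
     else if t \<le> f (p (i - 1)) \<and> f (p i) < t then integral {p i..p i + r} \<phi> else 0) / r) \<longlongrightarrow>
    (if (t \<le> f (p (i - 1))) \<noteq> (t \<le> f (p i)) then \<phi> (p i) else 0)) (at_right 0)"
    using tendsto_left_average[OF \<open>0 < p i\<close>] tendsto_right_average[of "p i"] \<open>0 < p i\<close>
    by auto
  moreover have "\<forall>\<^sub>F r in at_right 0. (if f (p (i - 1)) < t \<and> t \<le> f (p i) then integral {p i - r..p i} \<phi>
     else if t \<le> f (p (i - 1)) \<and> f (p i) < t then integral {p i..p i + r} \<phi> else 0) / r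
      = measure (nu \<phi>) (boundary_strip t i r) / r"
    unfolding eventually_at_right_field using \<open>0 < p i\<close> assms
    by (intro exI[of _ "p i"]) (auto simp: measure_boundary_strip)
  ultimately show ?thesis by (rule Lim_transform_eventually)
qed

lemma nu_plus_superlevel_le:
  assumes "0 < t"
  shows "nu_plus \<phi> (superlevel t)
    \<le> ereal (\<Sum>i=1..N. if (t \<le> f (p (i - 1))) \<noteq> (t \<le> f (p i)) then \<phi> (p i) else 0)"
proof -
  let ?A = "superlevel t"
  obtain d where gap: "0 < d" "\<And>i. i < N \<Longrightarrow> d \<le> p (Suc i) - p i" by (rule obtain_min_gap) blast
  have A: "?A \<in> sets (nu \<phi>)" "emeasure (nu \<phi>) ?A = ennreal (measure (nu \<phi>) ?A)"
    using superlevel_in_borel[OF assms] emeasure_eq_ennreal_measure emeasure_superlevel_finite[OF assms]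
    by (auto simp: top.not_eq_extremum)
  have "(enn2ereal (emeasure (nu \<phi>) (enlarge ?A r)) - ereal (measure (nu \<phi>) ?A)) / ereal r
      \<le> ereal ((\<Sum>i=1..N. measure (nu \<phi>) (boundary_strip t i r)) / r)" if "0 < r" "r < d" for r
  proof -
    have strips: "r \<le> p i" if "i \<in> {1..N}" for i using p_ge_gap[OF gap(2) that] \<open>r < d\<close> by simp
    have "emeasure (nu \<phi>) (enlarge ?A r) \<le> emeasure (nu \<phi>) (?A \<union> (\<Union>i\<in>{1..N}. boundary_strip t i r))"
      using enlarge_superlevel_subset[OF assms gap(2)] \<open>r < d\<close> A
      by (intro emeasure_mono) (auto simp: boundary_strip_def)
    also have "\<dots> \<le> emeasure (nu \<phi>) ?A + (\<Sum>i=1..N. emeasure (nu \<phi>) (boundary_strip t i r))"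
      using A by (intro order.trans[OF emeasure_subadditive add_left_mono] emeasure_subadditive_finite)
        (auto simp: boundary_strip_def)
    also have "\<dots> = ennreal (measure (nu \<phi>) ?A + (\<Sum>i=1..N. measure (nu \<phi>) (boundary_strip t i r)))"
      using strips by (simp add: A emeasure_boundary_strip sum_ennreal ennreal_plus sum_nonneg)
    finally have "enn2ereal (emeasure (nu \<phi>) (enlarge ?A r))
        \<le> ereal (measure (nu \<phi>) ?A + (\<Sum>i=1..N. measure (nu \<phi>) (boundary_strip t i r)))"
      by (metis enn2ereal_ennreal less_eq_ennreal.rep_eq measure_nonneg add_nonneg_nonneg sum_nonneg)
    hence "enn2ereal (emeasure (nu \<phi>) (enlarge ?A r)) - ereal (measure (nu \<phi>) ?A)
        \<le> ereal (\<Sum>i=1..N. measure (nu \<phi>) (boundary_strip t i r))"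
      by (cases "enn2ereal (emeasure (nu \<phi>) (enlarge ?A r))") auto
    hence "(enn2ereal (emeasure (nu \<phi>) (enlarge ?A r)) - ereal (measure (nu \<phi>) ?A)) / ereal r
        \<le> ereal (\<Sum>i=1..N. measure (nu \<phi>) (boundary_strip t i r)) / ereal r"
      using \<open>0 < r\<close> by (intro ereal_divide_right_mono) auto
    thus ?thesis using \<open>0 < r\<close> by simp
  qed
  hence "\<forall>\<^sub>F r in at_right 0. (enn2ereal (emeasure (nu \<phi>) (enlarge ?A r)) - ereal (measure (nu \<phi>) ?A)) / ereal r
      \<le> ereal ((\<Sum>i=1..N. measure (nu \<phi>) (boundary_strip t i r)) / r)"
    unfolding eventually_at_right_field using gap(1) by blast
  hence "nu_plus \<phi> ?A \<le> Liminf (at_right 0) (\<lambda>r. ereal ((\<Sum>i=1..N. measure (nu \<phi>) (boundary_strip t i r)) / r))"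
    unfolding nu_plus_def by (rule Liminf_mono)
  also have "\<dots> = ereal (\<Sum>i=1..N. if (t \<le> f (p (i - 1))) \<noteq> (t \<le> f (p i)) then \<phi> (p i) else 0)"
    unfolding sum_divide_distrib
    by (intro lim_imp_Liminf tendsto_ereal tendsto_sum tendsto_boundary_strip) auto
  finally show ?thesis .
qed

text \<open>The test points alternate between a breakpoint and a point just left of the next breakpoint,
  so that every jump of \<open>f\<close> is weighted by \<open>\<phi>\<close> slightly to the left of where it occurs.\<close>

lemma weighted_var_ge_shifted_jumps:
  assumes gap: "\<And>i. i < N \<Longrightarrow> d \<le> p (Suc i) - p i" and "0 < \<delta>" "\<delta> < d"
  shows "ereal (\<Sum>i=1..N. \<bar>f (p i) - f (p (i - 1))\<bar> * \<phi> (p i - \<delta>)) \<le> weighted_var \<phi> f"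
proof -
  define \<xi> where "\<xi> k = (if even k then p (k div 2) else p (Suc (k div 2)) - \<delta>)" for k
  have "\<xi> k < \<xi> (Suc k)" if "k < 2*N" for k
    using that gap[of "k div 2"] \<open>0 < \<delta>\<close> \<open>\<delta> < d\<close> by (cases "even k") (auto simp: \<xi>_def elim!: oddE)
  moreover have "closure {x. f x \<noteq> 0} \<subseteq> {\<xi> 0..\<xi> (2*N)}"
  proof (rule closure_minimal)
    show "{x. f x \<noteq> 0} \<subseteq> {\<xi> 0..\<xi> (2*N)}"
      using zero_negative zero_beyond p_0 by (force simp: \<xi>_def not_le[symmetric])
  qed simp
  moreover have "(\<Sum>k=1..2*N. \<bar>f (\<xi> k) - f (\<xi> (k - 1))\<bar> * \<phi> (\<xi> (k - 1)))
      = (\<Sum>i=1..N. \<bar>f (p i) - f (p (i - 1))\<bar> * \<phi> (p i - \<delta>))"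
    unfolding sum_atLeast1_atMost_pairs
  proof (rule sum.cong)
    fix i assume "i \<in> {1..N}"
    then obtain j where j: "i = Suc j" "j < N" by (cases i) auto
    hence "f (p i - \<delta>) = f (p (i - 1))"
      using gap[of j] \<open>0 < \<delta>\<close> \<open>\<delta> < d\<close> by (intro constant_on_cell) auto
    moreover have "\<xi> (2*i - 1) = p i - \<delta>" "\<xi> (2*i - 1 - 1) = p (i - 1)" "\<xi> (2*i) = p i"
      using j by (auto simp: \<xi>_def)
    ultimately show "\<bar>f (\<xi> (2*i - 1)) - f (\<xi> (2*i - 1 - 1))\<bar> * \<phi> (\<xi> (2*i - 1 - 1))
        + \<bar>f (\<xi> (2*i)) - f (\<xi> (2*i - 1))\<bar> * \<phi> (\<xi> (2*i - 1))
      = \<bar>f (p i) - f (p (i - 1))\<bar> * \<phi> (p i - \<delta>)" by simp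
  qed simp
  moreover have "0 \<le> \<xi> 0" by (simp add: \<xi>_def p_0)
  ultimately show ?thesis
    unfolding weighted_var_def
    by (intro Sup_upper, unfold mem_Collect_eq, intro exI[of _ "2*N"] exI[of _ \<xi>]) auto
qed

lemma weighted_var_ge_jumps:
  "ereal (\<Sum>i=1..N. \<bar>f (p i) - f (p (i - 1))\<bar> * \<phi> (p i)) \<le> weighted_var \<phi> f"
proof -
  obtain d where gap: "0 < d" "\<And>i. i < N \<Longrightarrow> d \<le> p (Suc i) - p i" by (rule obtain_min_gap) blast
  have "((\<lambda>\<delta>. ereal (\<Sum>i=1..N. \<bar>f (p i) - f (p (i - 1))\<bar> * \<phi> (p i - \<delta>)))
      \<longlongrightarrow> ereal (\<Sum>i=1..N. \<bar>f (p i) - f (p (i - 1))\<bar> * \<phi> (p i))) (at_right 0)"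
    using p_ge_gap[OF gap(2)] gap(1)
    by (intro tendsto_ereal tendsto_sum tendsto_mult_left tendsto_left) force
  moreover have "\<forall>\<^sub>F \<delta> in at_right 0.
      ereal (\<Sum>i=1..N. \<bar>f (p i) - f (p (i - 1))\<bar> * \<phi> (p i - \<delta>)) \<le> weighted_var \<phi> f"
    unfolding eventually_at_right_field using gap weighted_var_ge_shifted_jumps by blast
  ultimately show ?thesis by (intro tendsto_le[OF _ tendsto_const]) simp_all
qed

end

section \<open>Averaging over layers\<close>

lemma has_bochner_integral_sum_indicator:
  fixes a :: "'b \<Rightarrow> real"
  assumes "\<And>j. j \<in> T \<Longrightarrow> A j \<in> sets M" "\<And>j. j \<in> T \<Longrightarrow> emeasure M (A j) < \<infinity>"
  shows "has_bochner_integral M (\<lambda>x. \<Sum>j\<in>T. a j * indicator (A j) x) (\<Sum>j\<in>T. a j * measure M (A j))"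
  using assms
  by (intro has_bochner_integral_sum has_bochner_integral_mult_right has_bochner_integral_real_indicator)

lemma nn_integral_ge_concave_layers:
  fixes M :: "'a measure" and L :: "real \<Rightarrow> real" and f :: "'a \<Rightarrow> real"
    and h :: "'b \<Rightarrow> real" and A :: "'b \<Rightarrow> 'a set"
  assumes concave: "concave_on {0..} L" and L_nonneg: "\<And>x. 0 \<le> x \<Longrightarrow> 0 \<le> L x"
    and "finite T" and h_pos: "\<And>j. j \<in> T \<Longrightarrow> 0 < h j"
    and A: "\<And>j. j \<in> T \<Longrightarrow> A j \<in> sets M" and \<mu>_pos: "\<And>j. j \<in> T \<Longrightarrow> 0 < measure M (A j)"
    and below: "\<And>x. x \<in> space M \<Longrightarrow> (\<Sum>j\<in>T. h j * indicator (A j) x) \<le> f x"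
  defines "\<mu> \<equiv> \<lambda>j. measure M (A j)" and "X \<equiv> \<Sum>j\<in>T. h j * measure M (A j)"
  shows "ennreal (\<Sum>j\<in>T. h j * \<mu> j / X * (\<mu> j * L (X / \<mu> j))) \<le> (\<integral>\<^sup>+x. ennreal (L (f x)) \<partial>M)"
proof (cases "T = {}")
  case True
  thus ?thesis by simp
next
  case False
  have "0 < X" unfolding X_def \<mu>_def using False \<open>finite T\<close> h_pos \<mu>_pos by (intro sum_pos) auto
  define a where "a j = h j * \<mu> j * L (X / \<mu> j) / X" for j
  define g where "g x = (\<Sum>j\<in>T. a j * indicator (A j) x)" for x
  have "emeasure M (A j) < \<infinity>" if "j \<in> T" for j
    using \<mu>_pos[OF that] measure_zero_top by (fastforce simp: top.not_eq_extremum)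
  hence integral_g: "has_bochner_integral M g (\<Sum>j\<in>T. a j * \<mu> j)"
    unfolding g_def \<mu>_def using A by (intro has_bochner_integral_sum_indicator)
  have value_eq: "(\<Sum>j\<in>T. h j * \<mu> j / X * (\<mu> j * L (X / \<mu> j))) = (\<Sum>j\<in>T. a j * \<mu> j)"
    unfolding a_def by (simp add: mult_ac)
  have "0 \<le> a j" if "j \<in> T" for j
    using h_pos[OF that] \<mu>_pos[OF that] L_nonneg[of "X / \<mu> j"] \<open>0 < X\<close> by (simp add: a_def \<mu>_def)
  hence "0 \<le> g x" for x unfolding g_def by (intro sum_nonneg) auto
  hence "ennreal (\<Sum>j\<in>T. a j * \<mu> j) = (\<integral>\<^sup>+x. ennreal (g x) \<partial>M)"
    using integral_g nn_integral_eq_integral[of M g] by (simp add: has_bochner_integral_iff)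
  also have "\<dots> \<le> (\<integral>\<^sup>+x. ennreal (L (f x)) \<partial>M)"
  proof (intro nn_integral_mono ennreal_leI)
    fix x assume "x \<in> space M"
    define S where "S = {j\<in>T. x \<in> A j}"
    have "g x = (\<Sum>j\<in>T. if x \<in> A j then a j else 0)"
      unfolding g_def by (intro sum.cong refl) (simp split: split_indicator)
    also have "\<dots> = (\<Sum>j\<in>S. h j * \<mu> j * L (X / \<mu> j) / X)"
      unfolding S_def a_def by (rule sum.inter_filter[symmetric, OF \<open>finite T\<close>])
    also have "\<dots> \<le> L (f x)"
    proof (rule concave_layer_sum_le[OF concave L_nonneg _ _ \<open>0 < X\<close>])
      show "finite S" using \<open>finite T\<close> by (simp add: S_def)
      show "0 < h j \<and> 0 < \<mu> j" if "j \<in> S" for j using that h_pos \<mu>_pos by (simp add: S_def \<mu>_def)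
      show "(\<Sum>j\<in>S. h j * \<mu> j) \<le> X"
        unfolding X_def \<mu>_def using \<open>finite T\<close> h_pos by (intro sum_mono2) (auto simp: S_def less_imp_le)
      have "(\<Sum>j\<in>S. h j) = (\<Sum>j\<in>T. if x \<in> A j then h j else 0)"
        unfolding S_def by (rule sum.inter_filter[OF \<open>finite T\<close>])
      also have "\<dots> = (\<Sum>j\<in>T. h j * indicator (A j) x)"
        by (intro sum.cong refl) (simp split: split_indicator)
      also have "\<dots> \<le> f x" by (rule below[OF \<open>x \<in> space M\<close>])
      finally show "(\<Sum>j\<in>S. h j) \<le> f x" .
    qed
    finally show "g x \<le> L (f x)" .
  qed
  finally show ?thesis unfolding value_eq .
qed

lemma IJKL_layer_average:
  fixes I J K L :: "real \<Rightarrow> real" and h \<mu> :: "'b \<Rightarrow> real"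
  assumes IJKL: "\<And>a b. 0 \<le> a \<Longrightarrow> 0 \<le> b \<Longrightarrow> I (a * b) \<le> b * J a + K (a * L b)"
    and concave: "concave_on {0..} K" and L_nonneg: "\<And>x. 0 \<le> x \<Longrightarrow> 0 \<le> L x"
    and "finite T" and pos: "\<And>j. j \<in> T \<Longrightarrow> 0 < h j \<and> 0 < \<mu> j"
  defines "X \<equiv> \<Sum>j\<in>T. h j * \<mu> j"
  shows "I X \<le> (\<Sum>j\<in>T. h j * J (\<mu> j)) + K (\<Sum>j\<in>T. h j * \<mu> j / X * (\<mu> j * L (X / \<mu> j)))"
proof (cases "T = {}")
  case True
  thus ?thesis using IJKL[of 0 0] by (simp add: X_def)
next
  case False
  have "0 < X" unfolding X_def using False \<open>finite T\<close> pos by (intro sum_pos) auto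
  \<comment> \<open>Average the hypothesis at \<open>a = \<mu> j\<close>, \<open>b = X / \<mu> j\<close> with weights \<open>h j * \<mu> j / X\<close>.\<close>
  define w where "w j = h j * \<mu> j / X" for j
  define y where "y j = \<mu> j * L (X / \<mu> j)" for j
  have w: "(\<Sum>j\<in>T. w j) = 1" "\<And>j. j \<in> T \<Longrightarrow> 0 \<le> w j"
    using \<open>0 < X\<close> pos by (auto simp: w_def X_def sum_divide_distrib[symmetric] less_imp_le)
  have y: "y j \<in> {0..}" if "j \<in> T" for j
    using pos[OF that] L_nonneg[of "X / \<mu> j"] \<open>0 < X\<close> by (simp add: y_def)
  have bound: "I X \<le> (X / \<mu> j) * J (\<mu> j) + K (y j)" if "j \<in> T" for j
    using IJKL[of "\<mu> j" "X / \<mu> j"] pos[OF that] \<open>0 < X\<close> by (simp add: y_def)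
  have "I X = (\<Sum>j\<in>T. w j * I X)" using w(1) by (simp add: sum_distrib_right[symmetric])
  also have "\<dots> \<le> (\<Sum>j\<in>T. w j * ((X / \<mu> j) * J (\<mu> j) + K (y j)))"
    using bound w(2) by (intro sum_mono mult_left_mono) auto
  also have "\<dots> = (\<Sum>j\<in>T. h j * J (\<mu> j) + w j * K (y j))"
  proof (rule sum.cong)
    fix j assume "j \<in> T"
    hence "w j * (X / \<mu> j) = h j" using pos[of j] \<open>0 < X\<close> by (simp add: w_def)
    thus "w j * (X / \<mu> j * J (\<mu> j) + K (y j)) = h j * J (\<mu> j) + w j * K (y j)"
      by (metis distrib_left mult.assoc)
  qed simp
  also have "\<dots> = (\<Sum>j\<in>T. h j * J (\<mu> j)) + (\<Sum>j\<in>T. w j * K (y j))"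
    by (rule sum.distrib)
  also have "(\<Sum>j\<in>T. w j * K (y j)) \<le> K (\<Sum>j\<in>T. w j *\<^sub>R y j)"
    using w y by (intro concave_on_sum[OF \<open>finite T\<close> False concave]) auto
  finally show ?thesis by (simp add: w_def y_def)
qed

lemma K_ext_ge:
  assumes "mono_on {0..} K" "0 \<le> t" "ennreal t \<le> \<Lambda>"
  shows "ereal (K t) \<le> K_ext K \<Lambda>"
proof (cases "\<Lambda> = \<infinity>")
  case True
  thus ?thesis using assms by (auto simp: K_ext_def intro!: SUP_upper)
next
  case False
  hence "t \<le> enn2real \<Lambda>"
    using assms enn2real_mono[OF assms(3)] by (simp add: top.not_eq_extremum)
  thus ?thesis using False assms by (auto simp: K_ext_def intro: mono_onD)
qed

section \<open>Layer-cake decomposition\<close>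

locale weighted_step_levels = weighted_step_partition \<phi> f N p
  for \<phi> f :: "real \<Rightarrow> real" and N :: nat and p :: "nat \<Rightarrow> real" +
  fixes n :: nat and c :: "nat \<Rightarrow> real"
  assumes strict_mono_c: "strict_mono_on {..n} c" and c_0: "c 0 = 0"
    and values_in_levels: "\<And>x. 0 \<le> x \<Longrightarrow> f x \<in> c ` {..n}"
begin

lemma level_step: "j < n \<Longrightarrow> c j < c (Suc j)"
  using strict_mono_onD[OF strict_mono_c, of j "Suc j"] by simp

lemma level_pos: "j < n \<Longrightarrow> 0 < c (Suc j)"
  using strict_mono_onD[OF strict_mono_c, of 0 "Suc j"] c_0 by simp

lemma layer_cake: "f x = (\<Sum>j<n. (c (Suc j) - c j) * indicator (superlevel (c (Suc j))) x)"
proof (cases "0 \<le> x")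
  case True
  then obtain k where "k \<le> n" "f x = c k" using values_in_levels by blast
  have "(\<Sum>j<n. (c (Suc j) - c j) * indicator (superlevel (c (Suc j))) x)
      = (\<Sum>j<n. if (c (Suc j) \<le> c 0) \<noteq> (c (Suc j) \<le> c k) then c (Suc j) - c j else 0)"
    using True \<open>f x = c k\<close> c_0
    by (intro sum.cong refl) (auto simp: superlevel_def dest!: level_pos split: split_indicator)
  also have "\<dots> = c k" using sum_crossed_levels[OF strict_mono_c, of 0 k] \<open>k \<le> n\<close> c_0
    strict_mono_on_leD[OF strict_mono_c, of 0 k] by simp
  finally show ?thesis using \<open>f x = c k\<close> by simp
next
  case False
  thus ?thesis using zero_negative[of x] by (simp add: superlevel_def)
qed

lemma integral_layer_cake:
  "(\<integral>x. f x \<partial>nu \<phi>) = (\<Sum>j<n. (c (Suc j) - c j) * measure (nu \<phi>) (superlevel (c (Suc j))))"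
proof -
  have "has_bochner_integral (nu \<phi>) f
      (\<Sum>j<n. (c (Suc j) - c j) * measure (nu \<phi>) (superlevel (c (Suc j))))"
    using layer_cake level_pos superlevel_in_borel emeasure_superlevel_finite
    by (subst layer_cake[abs_def]) (intro has_bochner_integral_sum_indicator, auto)
  thus ?thesis by (rule has_bochner_integral_integral_eq)
qed

text \<open>Each breakpoint \<open>p i\<close> lies on the boundary of exactly the superlevel sets at the levels
  between \<open>f (p (i - 1))\<close> and \<open>f (p i)\<close>, which add up to the jump of \<open>f\<close> there.\<close>

lemma layer_isoperimetric_sum_le:
  assumes iso: "lower_isoperimetric \<phi> J"
  shows "ereal (\<Sum>j<n. (c (Suc j) - c j) * J (measure (nu \<phi>) (superlevel (c (Suc j)))))
    \<le> weighted_var \<phi> f"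
proof -
  define crossing where "crossing j i \<longleftrightarrow> (c (Suc j) \<le> f (p (i - 1))) \<noteq> (c (Suc j) \<le> f (p i))"
    for j i
  have "J (measure (nu \<phi>) (superlevel (c (Suc j)))) \<le> (\<Sum>i=1..N. if crossing j i then \<phi> (p i) else 0)"
    if "j < n" for j
  proof -
    have "ereal (J (measure (nu \<phi>) (superlevel (c (Suc j))))) \<le> nu_plus \<phi> (superlevel (c (Suc j)))"
      using iso superlevel_in_borel[OF level_pos] emeasure_superlevel_finite[OF level_pos] that
      unfolding lower_isoperimetric_def by (auto simp: superlevel_def)
    also have "\<dots> \<le> ereal (\<Sum>i=1..N. if crossing j i then \<phi> (p i) else 0)"
      unfolding crossing_def by (rule nu_plus_superlevel_le[OF level_pos[OF that]])
    finally show ?thesis by simp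
  qed
  hence "(\<Sum>j<n. (c (Suc j) - c j) * J (measure (nu \<phi>) (superlevel (c (Suc j)))))
      \<le> (\<Sum>j<n. (c (Suc j) - c j) * (\<Sum>i=1..N. if crossing j i then \<phi> (p i) else 0))"
    using level_step by (intro sum_mono mult_left_mono) (auto simp: less_imp_le)
  also have "\<dots> = (\<Sum>i=1..N. \<Sum>j<n. (c (Suc j) - c j) * (if crossing j i then \<phi> (p i) else 0))"
    by (simp add: sum_distrib_left sum.swap[of _ "{..<n}"])
  also have "\<dots> = (\<Sum>i=1..N. \<bar>f (p i) - f (p (i - 1))\<bar> * \<phi> (p i))"
  proof (rule sum.cong)
    fix i assume "i \<in> {1..N}"
    hence "0 \<le> p (i - 1)" "0 \<le> p i" using p_nonneg[of "i - 1"] p_nonneg[of i] by auto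
    then obtain a b where "a \<le> n" "f (p (i - 1)) = c a" "b \<le> n" "f (p i) = c b"
      using values_in_levels by (metis atMost_iff imageE)
    moreover have "(\<Sum>j<n. (c (Suc j) - c j) * (if crossing j i then \<phi> (p i) else 0))
        = (\<Sum>j<n. if crossing j i then c (Suc j) - c j else 0) * \<phi> (p i)"
      unfolding sum_distrib_right by (intro sum.cong refl) simp
    ultimately show "(\<Sum>j<n. (c (Suc j) - c j) * (if crossing j i then \<phi> (p i) else 0))
        = \<bar>f (p i) - f (p (i - 1))\<bar> * \<phi> (p i)"
      using sum_crossed_levels[OF strict_mono_c, of a b] by (simp add: crossing_def abs_minus_commute)
  qed simp
  finally show ?thesis using weighted_var_ge_jumps by (rule ereal_less_eq(3)[THEN iffD2, THEN order_trans])
qed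

definition layer_height :: "nat \<Rightarrow> real" where
  "layer_height j = c (Suc j) - c j"

definition layer_mass :: "nat \<Rightarrow> real" where
  "layer_mass j = measure (nu \<phi>) (superlevel (c (Suc j)))"

definition massive_layers :: "nat set" where
  "massive_layers = {j. j < n \<and> 0 < layer_mass j}"

lemma finite_massive_layers [simp]: "finite massive_layers"
  by (simp add: massive_layers_def)

lemma massive_layer_pos: "j \<in> massive_layers \<Longrightarrow> 0 < layer_height j \<and> 0 < layer_mass j"
  using level_step by (simp add: massive_layers_def layer_height_def)

lemma integral_eq_massive_layers:
  "(\<integral>x. f x \<partial>nu \<phi>) = (\<Sum>j\<in>massive_layers. layer_height j * layer_mass j)"
  unfolding integral_layer_cake massive_layers_def layer_height_def layer_mass_def
  by (rule sum.mono_neutral_right) (auto simp: less_le)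

lemma massive_layers_isoperimetric_sum_le:
  assumes "lower_isoperimetric \<phi> J" and J_nonneg: "\<And>x. 0 \<le> x \<Longrightarrow> 0 \<le> J x"
  shows "ereal (\<Sum>j\<in>massive_layers. layer_height j * J (layer_mass j)) \<le> weighted_var \<phi> f"
proof -
  have "(\<Sum>j\<in>massive_layers. layer_height j * J (layer_mass j)) \<le> (\<Sum>j<n. layer_height j * J (layer_mass j))"
  proof (rule sum_mono2)
    show "0 \<le> layer_height j * J (layer_mass j)" if "j \<in> {..<n} - massive_layers" for j
      using that level_step[of j] J_nonneg[of "layer_mass j"]
      by (intro mult_nonneg_nonneg) (simp_all add: layer_height_def layer_mass_def)
  qed (auto simp: massive_layers_def)
  thus ?thesis
    using layer_isoperimetric_sum_le[OF assms(1)] unfolding layer_height_def layer_mass_def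
    by (meson ereal_less_eq(3) order_trans)
qed

lemma layer_average_le_nn_integral:
  fixes L :: "real \<Rightarrow> real"
  assumes "concave_on {0..} L" and L_nonneg: "\<And>x. 0 \<le> x \<Longrightarrow> 0 \<le> L x"
  defines "X \<equiv> \<Sum>j\<in>massive_layers. layer_height j * layer_mass j"
  shows "0 \<le> (\<Sum>j\<in>massive_layers. layer_height j * layer_mass j / X * (layer_mass j * L (X / layer_mass j)))"
    and "ennreal (\<Sum>j\<in>massive_layers. layer_height j * layer_mass j / X * (layer_mass j * L (X / layer_mass j)))
      \<le> (\<integral>\<^sup>+x. ennreal (L (f x)) \<partial>nu \<phi>)"
proof -
  have "0 \<le> X" unfolding X_def using massive_layer_pos by (intro sum_nonneg) (simp add: less_imp_le)
  thus "0 \<le> (\<Sum>j\<in>massive_layers. layer_height j * layer_mass j / X * (layer_mass j * L (X / layer_mass j)))"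
    using massive_layer_pos L_nonneg
    by (intro sum_nonneg mult_nonneg_nonneg divide_nonneg_nonneg) (simp_all add: less_imp_le)
  show "ennreal (\<Sum>j\<in>massive_layers. layer_height j * layer_mass j / X * (layer_mass j * L (X / layer_mass j)))
      \<le> (\<integral>\<^sup>+x. ennreal (L (f x)) \<partial>nu \<phi>)"
    unfolding X_def layer_mass_def
  proof (rule nn_integral_ge_concave_layers[OF assms(1,2), where A = "\<lambda>j. superlevel (c (Suc j))"])
    show "superlevel (c (Suc j)) \<in> sets (nu \<phi>)" if "j \<in> massive_layers" for j
      using that superlevel_in_borel[OF level_pos] by (simp add: massive_layers_def)
    show "(\<Sum>j\<in>massive_layers. layer_height j * indicator (superlevel (c (Suc j))) x) \<le> f x" for x
    proof -
      have "(\<Sum>j\<in>massive_layers. layer_height j * indicator (superlevel (c (Suc j))) x)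
          \<le> (\<Sum>j<n. layer_height j * indicator (superlevel (c (Suc j))) x)"
      proof (rule sum_mono2)
        show "0 \<le> layer_height j * indicator (superlevel (c (Suc j))) x"
          if "j \<in> {..<n} - massive_layers" for j
          using that level_step[of j] by (intro mult_nonneg_nonneg) (simp_all add: layer_height_def)
      qed (auto simp: massive_layers_def)
      thus ?thesis using layer_cake[of x] by (simp add: layer_height_def)
    qed
  qed (use massive_layer_pos in \<open>auto simp: layer_mass_def\<close>)
qed

end

lemma (in weighted_step_partition) obtain_step_levels:
  assumes "\<And>x. 0 \<le> x \<Longrightarrow> 0 \<le> f x"
  obtains n :: nat and c :: "nat \<Rightarrow> real" where "weighted_step_levels \<phi> f N p n c"
proof (rule obtain_levels[OF assms])
  fix n :: nat and c :: "nat \<Rightarrow> real"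
  assume "strict_mono_on {..n} c" "c 0 = 0" "\<And>x. 0 \<le> x \<Longrightarrow> f x \<in> c ` {..n}"
  thus thesis by (intro that[of n c]) unfold_locales
qed

theorem corollary2p7:
  fixes \<phi> I J K L f :: "real \<Rightarrow> real"
  assumes phi_cont: "continuous_on {0..} \<phi>"
    and phi_nonneg: "\<forall>x\<ge>0. 0 \<le> \<phi> x"
    and I_nonneg: "\<forall>x\<ge>0. 0 \<le> I x"
    and J_nonneg: "\<forall>x\<ge>0. 0 \<le> J x"
    and K_nonneg: "\<forall>x\<ge>0. 0 \<le> K x"
    and L_nonneg: "\<forall>x\<ge>0. 0 \<le> L x"
    and IJKL: "\<forall>a b. 0 \<le> a \<longrightarrow> 0 \<le> b \<longrightarrow> I (a * b) \<le> b * J a + K (a * L b)"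
    and J_iso: "lower_isoperimetric \<phi> J"
    and K_mono: "mono_on {0..} K"
    and K_concave: "concave_on {0..} K"
    and L_concave: "concave_on {0..} L"
    and f_step: "step_fun f"
    and f_nonneg: "\<forall>x\<ge>0. 0 \<le> f x"
  shows "ereal (I (\<integral>x. f x \<partial>nu \<phi>))
           \<le> K_ext K (\<integral>\<^sup>+x. ennreal (L (f x)) \<partial>nu \<phi>) + weighted_var \<phi> f"
proof -
  obtain N p where "step_partition f N p" using f_step by (rule step_fun_imp_step_partition)
  then interpret weighted_step_partition \<phi> f N p
    using phi_cont phi_nonneg by (simp add: weighted_step_partition_def nonneg_density_def)
  have "\<And>x. 0 \<le> x \<Longrightarrow> 0 \<le> f x" using f_nonneg by simp
  then obtain n c where "weighted_step_levels \<phi> f N p n c" by (rule obtain_step_levels)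
  then interpret weighted_step_levels \<phi> f N p n c .
  define X where "X = (\<Sum>j\<in>massive_layers. layer_height j * layer_mass j)"
  define S where "S = (\<Sum>j\<in>massive_layers. layer_height j * J (layer_mass j))"
  define \<Lambda> where
    "\<Lambda> = (\<Sum>j\<in>massive_layers. layer_height j * layer_mass j / X * (layer_mass j * L (X / layer_mass j)))"
  have "I X \<le> S + K \<Lambda>"
    unfolding X_def S_def \<Lambda>_def using IJKL K_concave L_nonneg massive_layer_pos
    by (intro IJKL_layer_average) auto
  hence "ereal (I X) \<le> ereal (K \<Lambda>) + ereal S" by simp
  also have "\<dots> \<le> K_ext K (\<integral>\<^sup>+x. ennreal (L (f x)) \<partial>nu \<phi>) + weighted_var \<phi> f"
  proof (rule add_mono)
    show "ereal (K \<Lambda>) \<le> K_ext K (\<integral>\<^sup>+x. ennreal (L (f x)) \<partial>nu \<phi>)"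
      using layer_average_le_nn_integral[OF L_concave] L_nonneg unfolding \<Lambda>_def X_def
      by (intro K_ext_ge[OF K_mono]) auto
    show "ereal S \<le> weighted_var \<phi> f"
      unfolding S_def using J_iso J_nonneg by (intro massive_layers_isoperimetric_sum_le) auto
  qed
  finally show ?thesis unfolding integral_eq_massive_layers X_def .
qed

end
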